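(* Let $I\subset S=K[x_1,\dots,x_t]$ be a proper monomial ideal and $n\ge 1$. Let $\mathbf X^{\mathbf a}$ be a monomial corresponding to $v(I^n)$, i.e. $\deg\mathbf X^{\mathbf a}=v(I^n)$ and $(I^n:\mathbf X^{\mathbf a})\in\operatorname{Ass}(S/I^n)$. If $\mathbf X^{\mathbf G}$ is a proper divisor of $\mathbf X^{\mathbf a}$, then $v(I^n)=v(I^n:\mathbf X^{\mathbf G})+\deg\mathbf X^{\mathbf G}$.
   Context: $K$ is a field and $S$ is standard graded. For a proper graded ideal $J$, the $v$-number is $v(J)=\min\{k\ge 0 : \exists f\in S_k,\ \mathcal P\in\operatorname{Ass}(S/J) \text{ with } (J:f)=\mathcal P\}$. $\mathbf X^{\mathbf a}$ denotes the monomial $x_1^{a_1}\cdots x_t^{a_t}$. *)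

theory Defs
  imports Main "HOL-Library.Poly_Mapping"
begin

text \<open>The polynomial ring S = K[x_v : v in 'v] (finite variable type 'v, t = CARD('v))
  is modelled as finitely supported maps from exponent vectors to coefficients.\<close>

type_synonym ('v, 'k) mpoly = "('v \<Rightarrow>\<^sub>0 nat) \<Rightarrow>\<^sub>0 'k"

definition is_ideal :: "'r::comm_ring_1 set \<Rightarrow> bool" where
  "is_ideal I \<longleftrightarrow> 0 \<in> I \<and> (\<forall>f\<in>I. \<forall>g\<in>I. f + g \<in> I) \<and> (\<forall>f\<in>I. \<forall>r. r * f \<in> I)"

definition ideal_gen :: "'r::comm_ring_1 set \<Rightarrow> 'r set" where
  "ideal_gen G = \<Inter> {I. is_ideal I \<and> G \<subseteq> I}"

definition ideal_prod :: "'r::comm_ring_1 set \<Rightarrow> 'r set \<Rightarrow> 'r set" where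
  "ideal_prod I J = ideal_gen {f * g | f g. f \<in> I \<and> g \<in> J}"

primrec ideal_pow :: "'r::comm_ring_1 set \<Rightarrow> nat \<Rightarrow> 'r set" where
  "ideal_pow I 0 = UNIV"
| "ideal_pow I (Suc n) = ideal_prod I (ideal_pow I n)"

definition colon :: "'r::comm_ring_1 set \<Rightarrow> 'r \<Rightarrow> 'r set" where
  "colon J f = {g. g * f \<in> J}"

definition is_prime_ideal :: "'r::comm_ring_1 set \<Rightarrow> bool" where
  "is_prime_ideal P \<longleftrightarrow> is_ideal P \<and> P \<noteq> UNIV \<and> (\<forall>a b. a * b \<in> P \<longrightarrow> a \<in> P \<or> b \<in> P)"

text \<open>Associated primes of S/J: prime ideals of the form (J : f).\<close>
definition Ass :: "'r::comm_ring_1 set \<Rightarrow> 'r set set" where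
  "Ass J = {P. is_prime_ideal P \<and> (\<exists>f. P = colon J f)}"

definition mono :: "('v \<Rightarrow>\<^sub>0 nat) \<Rightarrow> ('v, 'k::field) mpoly" where
  "mono a = Poly_Mapping.single a 1"

definition mdeg :: "('v::finite \<Rightarrow>\<^sub>0 nat) \<Rightarrow> nat" where
  "mdeg a = (\<Sum>i\<in>UNIV. Poly_Mapping.lookup a i)"

text \<open>f \<in> S_k: homogeneous of degree k (0 included).\<close>
definition homogeneous_of :: "nat \<Rightarrow> ('v::finite, 'k::field) mpoly \<Rightarrow> bool" where
  "homogeneous_of k f \<longleftrightarrow> (\<forall>a. Poly_Mapping.lookup f a \<noteq> 0 \<longrightarrow> mdeg a = k)"

definition monomial_ideal :: "('v::finite, 'k::field) mpoly set \<Rightarrow> bool" where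
  "monomial_ideal I \<longleftrightarrow> (\<exists>A. I = ideal_gen (mono ` A))"

definition v_number :: "('v::finite, 'k::field) mpoly set \<Rightarrow> nat" where
  "v_number J = (LEAST k. \<exists>f P. homogeneous_of k f \<and> P \<in> Ass J \<and> colon J f = P)"

end

theory Submission
  imports Defs
begin

text \<open>Dividing the witness monomial of \<open>v(J)\<close> by \<open>X\<^sup>G\<close> yields a witness of degree
  \<open>v(J) - deg X\<^sup>G\<close> for \<open>v(J : X\<^sup>G)\<close>; conversely, multiplying a witness for \<open>v(J : X\<^sup>G)\<close>
  by \<open>X\<^sup>G\<close> yields a witness for \<open>v(J)\<close>, because \<open>((J : X\<^sup>G) : f) = (J : f X\<^sup>G)\<close>.
  Neither direction uses that \<open>J\<close> is a power of a monomial ideal, nor that the divisor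
  \<open>X\<^sup>G\<close> is proper.\<close>

lemma colon_colon: "colon (colon J g) f = colon J (f * g)"
  unfolding colon_def by (simp add: mult.assoc)

lemma Ass_colon_subset: "Ass (colon J g) \<subseteq> Ass J"
  unfolding Ass_def colon_colon by blast

lemma colon_in_Ass_colon:
  assumes "colon J (f * g) \<in> Ass J"
  shows "colon (colon J g) f \<in> Ass (colon J g)"
  using assms unfolding Ass_def colon_colon by blast

lemma mdeg_add: "mdeg (a + b) = mdeg a + mdeg b"
  unfolding mdeg_def by (simp add: lookup_add sum.distrib)

lemma mono_add: "(mono (a + b) :: ('v, 'k::field) mpoly) = mono a * mono b"
  unfolding mono_def by (simp add: mult_single)

lemma homogeneous_of_mono: "homogeneous_of (mdeg a) (mono a :: ('v::finite, 'k::field) mpoly)"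
  unfolding homogeneous_of_def mono_def by (simp add: lookup_single when_def)

lemma homogeneous_of_mult:
  fixes f g :: "('v::finite, 'k::field) mpoly"
  assumes "homogeneous_of k f" and "homogeneous_of l g"
  shows "homogeneous_of (k + l) (f * g)"
  unfolding homogeneous_of_def
proof (intro allI impI)
  fix c assume "Poly_Mapping.lookup (f * g) c \<noteq> 0"
  then have "c \<in> Poly_Mapping.keys (f * g)" by (simp add: in_keys_iff)
  then obtain d e where "c = d + e" "d \<in> Poly_Mapping.keys f" "e \<in> Poly_Mapping.keys g"
    using keys_mult by blast
  with assms show "mdeg c = k + l"
    unfolding homogeneous_of_def by (simp add: in_keys_iff mdeg_add)
qed

lemma v_number_le:
  assumes "homogeneous_of k f" and "colon J f \<in> Ass J"
  shows "v_number J \<le> k"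
  unfolding v_number_def by (rule Least_le) (use assms in blast)

lemma v_number_attained:
  assumes "homogeneous_of k f" and "colon J f \<in> Ass J"
  obtains g where "homogeneous_of (v_number J) g" and "colon J g \<in> Ass J"
proof -
  have "\<exists>g P. homogeneous_of (v_number J) g \<and> P \<in> Ass J \<and> colon J g = P"
    unfolding v_number_def by (rule LeastI) (use assms in blast)
  with that show ?thesis by blast
qed

lemma v_number_le_v_number_colon_mono:
  assumes "homogeneous_of k f" and "colon (colon J (mono G)) f \<in> Ass (colon J (mono G))"
  shows "v_number J \<le> v_number (colon J (mono G)) + mdeg G"
proof -
  obtain g where g: "homogeneous_of (v_number (colon J (mono G))) g"
    "colon (colon J (mono G)) g \<in> Ass (colon J (mono G))"
    using v_number_attained assms by blast
  have "homogeneous_of (v_number (colon J (mono G)) + mdeg G) (g * mono G)"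
    using g(1) homogeneous_of_mono by (rule homogeneous_of_mult)
  moreover have "colon J (g * mono G) \<in> Ass J"
    using g(2) Ass_colon_subset unfolding colon_colon by blast
  ultimately show ?thesis by (rule v_number_le)
qed

lemma v_number_colon_mono:
  assumes witness: "colon J (mono a) \<in> Ass J" and deg: "mdeg a = v_number J"
    and divides: "\<forall>i. Poly_Mapping.lookup G i \<le> Poly_Mapping.lookup a i"
  shows "v_number J = v_number (colon J (mono G)) + mdeg G"
proof -
  define b where "b = a - G"
  have a_eq: "a = b + G"
    unfolding b_def using divides by (intro poly_mapping_eqI) (simp add: lookup_add lookup_minus)
  have b_witness: "colon (colon J (mono G)) (mono b) \<in> Ass (colon J (mono G))"
    using witness unfolding a_eq mono_add by (rule colon_in_Ass_colon)
  have "v_number (colon J (mono G)) \<le> mdeg b"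
    using homogeneous_of_mono b_witness by (rule v_number_le)
  moreover have "v_number J \<le> v_number (colon J (mono G)) + mdeg G"
    using homogeneous_of_mono b_witness by (rule v_number_le_v_number_colon_mono)
  ultimately show ?thesis
    using deg a_eq mdeg_add by (metis add_le_cancel_right antisym)
qed

theorem proposition4p6:
  fixes I :: "('v::finite, 'k::field) mpoly set"
    and n :: nat and a G :: "'v \<Rightarrow>\<^sub>0 nat"
  assumes "monomial_ideal I" and "I \<noteq> UNIV" and "n \<ge> 1"
    and "mdeg a = v_number (ideal_pow I n)"
    and "colon (ideal_pow I n) (mono a) \<in> Ass (ideal_pow I n)"
    and "\<forall>i. Poly_Mapping.lookup G i \<le> Poly_Mapping.lookup a i" and "G \<noteq> a"
  shows "v_number (ideal_pow I n)
           = v_number (colon (ideal_pow I n) (mono G)) + mdeg G"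
  using assms(5,4,6) by (rule v_number_colon_mono)

end
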